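(* Fix $L\ge 2$ and $d\ge1$. For $l=1,\dots,L$ let $\mathcal X_l=\{\mathbf x^{[l]}_1,\dots,\mathbf x^{[l]}_{n_l}\}\subset\mathbb R^d$ be nested designs, $\mathcal X_L\subseteq\cdots\subseteq\mathcal X_1$, with $\mathbf x^{[l]}_i=\mathbf x^{[l-1]}_i$ for $i=1,\dots,n_l$, and let $\mathbf y_l=(y^{[l]}_1,\dots,y^{[l]}_{n_l})^T$ be observed outputs. Let $\alpha_l\in\mathbb R$, $\tau_l^2>0$, lengthscales $\theta_{lj}>0$ ($j=1,\dots,d$) and $\theta_{ly}>0$ ($l\ge2$). Define the kernels $K_1(\mathbf x,\mathbf x')=\prod_{j=1}^d\exp(-(x_j-x_j')^2/\theta_{1j})$ and, for $l\ge2$ and $\mathbf z=(\mathbf x,y),\mathbf z'=(\mathbf x',y')\in\mathbb R^{d+1}$, $K_l(\mathbf z,\mathbf z')=\exp(-(y-y')^2/\theta_{ly})\prod_{j=1}^d\exp(-(x_j-x_j')^2/\theta_{lj})$. Let $\mathbf K_1$ be the $n_1\times n_1$ matrix $(K_1(\mathbf x^{[1]}_i,\mathbf x^{[1]}_k))_{i,k}$ and, for $l\ge2$, $\mathbf K_l$ the $n_l\times n_l$ matrix $(K_l((\mathbf x^{[l]}_i,y^{[l-1]}_i),(\mathbf x^{[l]}_k,y^{[l-1]}_k)))_{i,k}$, all assumed invertible; let $r_i=(\mathbf K_l^{-1}(\mathbf y_l-\alpha_l\mathbf 1_{n_l}))_i$ (dependence on $l$ suppressed). For $l\ge2$ and $\mathbf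 x\in\mathbb R^d$, $u\in\mathbb R$, let $\mathbf k_l(\mathbf x,u)$ be the vector with entries $K_l((\mathbf x,u),(\mathbf x^{[l]}_i,y^{[l-1]}_i))$, and $\mu_l(\mathbf x,u)=\alpha_l+\mathbf k_l(\mathbf x,u)^T\mathbf K_l^{-1}(\mathbf y_l-\alpha_l\mathbf 1_{n_l})$, $\sigma_l^2(\mathbf x,u)=\tau_l^2(1-\mathbf k_l(\mathbf x,u)^T\mathbf K_l^{-1}\mathbf k_l(\mathbf x,u))$. Define $\mu_1^*(\mathbf x)=\alpha_1+\mathbf k_1(\mathbf x)^T\mathbf K_1^{-1}(\mathbf y_1-\alpha_1\mathbf 1_{n_1})$ and $\sigma_1^{*2}(\mathbf x)=\tau_1^2(1-\mathbf k_1(\mathbf x)^T\mathbf K_1^{-1}\mathbf k_1(\mathbf x))$, where $\mathbf k_1(\mathbf x)$ has entries $K_1(\mathbf x,\mathbf x^{[1]}_i)$. Fix $l\ge2$ and $\mathbf x$. Suppose that, conditionally on the data, $f_{l-1}(\mathbf x)\sim\mathcal N(\mu^*_{l-1}(\mathbf x),\sigma^{*2}_{l-1}(\mathbf x))$, and that conditionally on $f_{l-1}(\mathbf x)$ and the data, $f_l(\mathbf x)\sim\mathcal N(\mu_l(\mathbf x,f_{l-1}(\mathbf x)),\sigma_l^2(\mathbf x,f_{l-1}(\mathbf x)))$. Then the conditional mean $\mu_l^*(\mathbf x)$ and variance $\sigma^{*2}_l(\mathbf x)$ of $f_l(\mathbf x)$ given the data are $$\mu^*_l(\mathbf x)=\alpha_l+\sum_{i=1}^{n_l}r_i\prod_{j=1}^d\exp\Big(-\frac{(x_j-x^{[l]}_{ij})^2}{\theta_{lj}}\Big)\frac{1}{\sqrt{1+2\sigma^{*2}_{l-1}(\mathbf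 x)/\theta_{ly}}}\exp\Big(-\frac{(y^{[l-1]}_i-\mu^*_{l-1}(\mathbf x))^2}{\theta_{ly}+2\sigma^{*2}_{l-1}(\mathbf x)}\Big),$$ $$\sigma^{*2}_l(\mathbf x)=\tau_l^2-(\mu^*_l(\mathbf x)-\alpha_l)^2+\sum_{i,k=1}^{n_l}\zeta_{ik}\big(r_ir_k-\tau_l^2(\mathbf K_l^{-1})_{ik}\big)\prod_{j=1}^d\exp\Big(-\frac{(x_j-x^{[l]}_{ij})^2+(x_j-x^{[l]}_{kj})^2}{\theta_{lj}}\Big),$$ where $$\zeta_{ik}=\frac{1}{\sqrt{1+4\sigma^{*2}_{l-1}(\mathbf x)/\theta_{ly}}}\exp\Big(-\frac{(\tfrac{y^{[l-1]}_i+y^{[l-1]}_k}{2}-\mu^*_{l-1}(\mathbf x))^2}{\theta_{ly}/2+2\sigma^{*2}_{l-1}(\mathbf x)}-\frac{(y^{[l-1]}_i-y^{[l-1]}_k)^2}{2\theta_{ly}}\Big).$$ In particular these formulas define $\mu^*_l,\sigma^{*2}_l$ recursively for all $l=2,\dots,L$ starting from $\mu_1^*,\sigma_1^{*2}$.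
   Context: This is the Recursive Non-Additive (RNA) multi-fidelity emulator: $f_1(\mathbf x)=W_1(\mathbf x)$, $f_l(\mathbf x)=W_l(\mathbf x,f_{l-1}(\mathbf x))$ for $l\ge2$, with $W_l$ independent Gaussian processes with constant mean $\alpha_l$ and covariance $\tau_l^2K_l$. Here $x^{[l]}_{ij}$ denotes the $j$-th coordinate of $\mathbf x^{[l]}_i$, and $\mathbf 1_{n}$ the all-ones vector of length $n$. The "data" means $\mathbf y_1,\dots,\mathbf y_l$. *)

theory Defs
  imports "HOL-Probability.Probability"
begin

text \<open>Univariate Gaussian law N(m, v) as a measure on the reals; a zero
  variance gives the degenerate (Dirac) law at m.\<close>
definition gauss :: "real \<Rightarrow> real \<Rightarrow> real measure" where
  "gauss m v = (if v > 0 then density lborel (normal_density m (sqrt v)) else return borel m)"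

definition sqexp :: "real^'d \<Rightarrow> real^'d \<Rightarrow> real^'d \<Rightarrow> real" where
  "sqexp theta x x' = (\<Prod>j\<in>UNIV. exp (- ((x$j) - (x'$j))\<^sup>2 / theta$j))"

definition Kl :: "real^'d \<Rightarrow> real \<Rightarrow> (real^'d) \<times> real \<Rightarrow> (real^'d) \<times> real \<Rightarrow> real" where
  "Kl theta thy z z' = exp (- (snd z - snd z')\<^sup>2 / thy) * sqexp theta (fst z) (fst z')"

text \<open>Gram matrix K_l with entries K_l((X_i, w_i), (X_k, w_k)), where X_i are the
  level-l design points and w_i = y[l-1]_i the previous-level outputs.\<close>
definition gramL :: "real^'d \<Rightarrow> real \<Rightarrow> ('n \<Rightarrow> real^'d) \<Rightarrow> real^'n \<Rightarrow> real^'n^'n" where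
  "gramL theta thy X w = (\<chi> i k. Kl theta thy (X i, w$i) (X k, w$k))"

definition kvecL :: "real^'d \<Rightarrow> real \<Rightarrow> ('n \<Rightarrow> real^'d) \<Rightarrow> real^'n \<Rightarrow> real^'d \<Rightarrow> real \<Rightarrow> real^'n" where
  "kvecL theta thy X w x u = (\<chi> i. Kl theta thy (x, u) (X i, w$i))"

definition rvecL :: "real^'d \<Rightarrow> real \<Rightarrow> ('n \<Rightarrow> real^'d) \<Rightarrow> real^'n \<Rightarrow> real^'n \<Rightarrow> real \<Rightarrow> real^'n" where
  "rvecL theta thy X w y alpha = matrix_inv (gramL theta thy X w) *v (y - (\<chi> i. alpha))"

definition muL :: "real^'d \<Rightarrow> real \<Rightarrow> ('n \<Rightarrow> real^'d) \<Rightarrow> real^'n \<Rightarrow> real^'n \<Rightarrow> real \<Rightarrow> real^'d \<Rightarrow> real \<Rightarrow> real" where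
  "muL theta thy X w y alpha x u =
     alpha + (\<Sum>i\<in>UNIV. kvecL theta thy X w x u $ i * rvecL theta thy X w y alpha $ i)"

definition sig2L :: "real^'d \<Rightarrow> real \<Rightarrow> ('n \<Rightarrow> real^'d) \<Rightarrow> real^'n \<Rightarrow> real \<Rightarrow> real^'d \<Rightarrow> real \<Rightarrow> real" where
  "sig2L theta thy X w tau2 x u =
     tau2 * (1 - (\<Sum>i\<in>UNIV. kvecL theta thy X w x u $ i *
                   (matrix_inv (gramL theta thy X w) *v kvecL theta thy X w x u) $ i))"

end

theory Submission
  imports Defs
begin

text \<open>Writing the mixture as \<open>\<mu>\<^sub>l(x, u) + \<sigma>\<^sub>l(x, u) z\<close> with an independent standard normal \<open>z\<close>,
  Fubini gives \<open>E f\<^sub>l(x) = E \<mu>\<^sub>l(x, u)\<close> and \<open>E f\<^sub>l(x)\<^sup>2 = E (\<mu>\<^sub>l\<^sup>2 + \<sigma>\<^sub>l\<^sup>2)(x, u)\<close>, and both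
  integrands are linear combinations of the entries \<open>k\<^sub>i(u)\<close> and of the products \<open>k\<^sub>i(u) k\<^sub>k(u)\<close>.
  Each of these is a squared-exponential bump in \<open>u\<close> (a product of two bumps is a bump centred at
  the midpoint), and integrating a bump of width \<open>\<theta>\<close> against \<open>N(m, s2)\<close> is a Gaussian
  convolution, which produces the factors \<open>exp (-(c - m)\<^sup>2 / (\<theta> + 2 s2)) / sqrt (1 + 2 s2 / \<theta>)\<close>.

  The second-moment identity needs \<open>\<sigma>\<^sub>l\<^sup>2 \<ge> 0\<close>, because \<open>gauss\<close> with a negative variance is a Dirac
  mass; this follows from positive semidefiniteness of the squared-exponential kernel.\<close>

section \<open>Positive semidefiniteness of the squared-exponential kernel\<close>

definition psd_kernel :: "'i set \<Rightarrow> ('i \<Rightarrow> 'i \<Rightarrow> real) \<Rightarrow> bool" where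
  "psd_kernel I Q \<longleftrightarrow> (\<forall>c. 0 \<le> (\<Sum>i\<in>I. \<Sum>k\<in>I. c i * c k * Q i k))"

lemma psd_kernel_const_one: "psd_kernel I (\<lambda>_ _. 1)"
proof -
  have "(\<Sum>i\<in>I. \<Sum>k\<in>I. c i * c k * 1) = (\<Sum>i\<in>I. c i)\<^sup>2" for c :: "_ \<Rightarrow> real"
    by (simp add: power2_eq_square sum_product)
  then show ?thesis unfolding psd_kernel_def by simp
qed

text \<open>Schur product argument: \<open>exp (-(a - b)\<^sup>2 / \<theta>) = g a * g b * exp (2 a b / \<theta>)\<close>, and the
  exponential series writes the kernel as a sum with nonnegative coefficients of the kernels
  \<open>(g a a\<^sup>n) (g b b\<^sup>n) Q\<close>, each positive semidefinite.\<close>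
lemma psd_kernel_mult_gaussian:
  assumes "\<theta> > 0" and Q: "psd_kernel I Q"
  shows "psd_kernel I (\<lambda>i k. exp (-(a i - a k)\<^sup>2 / \<theta>) * Q i k)"
  unfolding psd_kernel_def
proof
  fix c :: "_ \<Rightarrow> real"
  define g where "g i = exp (- (a i)\<^sup>2 / \<theta>)" for i
  define b where "b n = (2 / \<theta>) ^ n / fact n" for n :: nat
  define t where "t n i = c i * g i * a i ^ n" for n i
  have split_exp: "exp (-(a i - a k)\<^sup>2 / \<theta>) = g i * g k * exp (2 * a i * a k / \<theta>)" for i k
    unfolding g_def using \<open>\<theta> > 0\<close> by (simp add: exp_add[symmetric] power2_eq_square field_simps)
  have term_sums: "(\<lambda>n. b n * (t n i * t n k * Q i k))
      sums (c i * c k * (exp (-(a i - a k)\<^sup>2 / \<theta>) * Q i k))" for i k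
  proof -
    have "(\<lambda>n. (c i * g i * c k * g k * Q i k) * ((2 * a i * a k / \<theta>) ^ n / fact n))
        sums ((c i * g i * c k * g k * Q i k) * exp (2 * a i * a k / \<theta>))"
      using exp_converges[of "2 * a i * a k / \<theta>"] by (intro sums_mult) (simp add: divide_inverse_commute)
    moreover have "(c i * g i * c k * g k * Q i k) * ((2 * a i * a k / \<theta>) ^ n / fact n)
        = b n * (t n i * t n k * Q i k)" for n
      unfolding b_def t_def by (simp add: power_mult_distrib power_divide field_simps)
    ultimately show ?thesis using split_exp by (simp add: mult_ac)
  qed
  have term_nonneg: "0 \<le> (\<Sum>i\<in>I. \<Sum>k\<in>I. b n * (t n i * t n k * Q i k))" for n
  proof -
    have "0 \<le> b n * (\<Sum>i\<in>I. \<Sum>k\<in>I. t n i * t n k * Q i k)"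
      using Q \<open>\<theta> > 0\<close> unfolding psd_kernel_def b_def by simp
    then show ?thesis by (simp add: sum_distrib_left)
  qed
  show "0 \<le> (\<Sum>i\<in>I. \<Sum>k\<in>I. c i * c k * (exp (-(a i - a k)\<^sup>2 / \<theta>) * Q i k))"
    by (rule sums_le[OF _ sums_zero sums_sum[OF sums_sum[OF term_sums]]]) (rule term_nonneg)
qed

lemma psd_kernel_prod_gaussian:
  assumes "finite J" and "\<And>j. j \<in> J \<Longrightarrow> \<theta> j > 0"
  shows "psd_kernel I (\<lambda>i k. \<Prod>j\<in>J. exp (-(a i j - a k j)\<^sup>2 / \<theta> j))"
  using assms
proof (induction J rule: finite_induct)
  case empty
  then show ?case using psd_kernel_const_one by simp
next
  case (insert j J)
  then have "psd_kernel I (\<lambda>i k. exp (-(a i j - a k j)\<^sup>2 / \<theta> j) * (\<Prod>j\<in>J. exp (-(a i j - a k j)\<^sup>2 / \<theta> j)))"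
    by (intro psd_kernel_mult_gaussian) auto
  then show ?case using insert by simp
qed

lemma psd_kernel_Kl:
  fixes p :: "'i \<Rightarrow> (real^'d::finite) \<times> real"
  assumes "\<forall>j. theta$j > 0" and "thy > 0"
  shows "psd_kernel I (\<lambda>i k. Kl theta thy (p i) (p k))"
proof -
  have "psd_kernel I (\<lambda>i k. \<Prod>j\<in>UNIV. exp (-(fst (p i) $ j - fst (p k) $ j)\<^sup>2 / theta$j))"
    using assms by (intro psd_kernel_prod_gaussian) auto
  then have "psd_kernel I (\<lambda>i k. exp (-(snd (p i) - snd (p k))\<^sup>2 / thy) *
      (\<Prod>j\<in>UNIV. exp (-(fst (p i) $ j - fst (p k) $ j)\<^sup>2 / theta$j)))"
    using assms by (intro psd_kernel_mult_gaussian)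
  then show ?thesis unfolding Kl_def sqexp_def by simp
qed

lemma sum_UNIV_option:
  "(\<Sum>q\<in>(UNIV :: 'a::finite option set). f q) = f None + (\<Sum>i\<in>UNIV. f (Some i))"
  by (simp add: UNIV_option_conv sum.reindex)

lemma matrix_inv_right: "invertible A \<Longrightarrow> A ** matrix_inv A = mat 1"
  unfolding invertible_def matrix_inv_def by (metis (mono_tags, lifting) someI_ex)

lemma Kl_sym: "Kl theta thy z z' = Kl theta thy z' z"
  unfolding Kl_def sqexp_def by (simp add: power2_commute)

lemma Kl_refl: "Kl theta thy z z = 1"
  unfolding Kl_def sqexp_def by simp

text \<open>\<open>1 - k\<^sup>T K\<^sup>-\<^sup>1 k\<close> is the quadratic form of the kernel on the design extended by the point
  \<open>(x, u)\<close>, evaluated at the coefficient vector \<open>(-1, K\<^sup>-\<^sup>1 k)\<close>.\<close>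
lemma sig2L_nonneg:
  fixes X :: "'n::finite \<Rightarrow> real^('d::finite)"
  assumes "tau2 \<ge> 0" and theta_pos: "\<forall>j. theta$j > 0" and thy_pos: "thy > 0"
    and K_inv: "invertible (gramL theta thy X w)"
  shows "0 \<le> sig2L theta thy X w tau2 x u"
proof -
  define G where "G = gramL theta thy X w"
  define k where "k = kvecL theta thy X w x u"
  define v where "v = matrix_inv G *v k"
  define p :: "'n option \<Rightarrow> (real^'d) \<times> real" where
    "p q = (case q of None \<Rightarrow> (x, u) | Some i \<Rightarrow> (X i, w$i))" for q
  define c :: "'n option \<Rightarrow> real" where "c q = (case q of None \<Rightarrow> -1 | Some i \<Rightarrow> v$i)" for q
  have Gv: "(\<Sum>j\<in>UNIV. G$i$j * v$j) = k$i" for i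
  proof -
    have "G *v v = k"
      unfolding v_def G_def by (simp add: matrix_vector_mul_assoc matrix_inv_right[OF K_inv])
    then show ?thesis by (simp add: matrix_vector_mult_def vec_eq_iff)
  qed
  have k_nth: "Kl theta thy (x, u) (X j, w$j) = k$j" "Kl theta thy (X j, w$j) (x, u) = k$j" for j
    unfolding k_def kvecL_def by (simp_all add: Kl_sym)
  have G_nth: "Kl theta thy (X i, w$i) (X j, w$j) = G$i$j" for i j
    unfolding G_def gramL_def by simp
  have "0 \<le> (\<Sum>i\<in>UNIV. \<Sum>j\<in>UNIV. c i * c j * Kl theta thy (p i) (p j))"
    using psd_kernel_Kl[OF theta_pos thy_pos] unfolding psd_kernel_def by blast
  also have "\<dots> = 1 - 2 * (\<Sum>j\<in>UNIV. v$j * k$j) + (\<Sum>i\<in>UNIV. \<Sum>j\<in>UNIV. v$i * (v$j * G$i$j))"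
    by (simp add: sum_UNIV_option c_def p_def Kl_refl k_nth G_nth sum.distrib sum_negf
        sum_subtractf mult.assoc mult.left_commute[of "G$_$_"])
  also have "\<dots> = 1 - 2 * (\<Sum>j\<in>UNIV. v$j * k$j) + (\<Sum>i\<in>UNIV. v$i * (\<Sum>j\<in>UNIV. G$i$j * v$j))"
    by (simp add: sum_distrib_left mult.commute)
  also have "\<dots> = 1 - (\<Sum>j\<in>UNIV. k$j * v$j)"
    unfolding Gv by (simp add: mult.commute)
  finally show ?thesis
    unfolding sig2L_def using \<open>tau2 \<ge> 0\<close> by (simp add: k_def v_def G_def)
qed

section \<open>Gaussian integrals\<close>

lemma sets_gauss [simp, measurable_cong]: "sets (gauss m v) = sets borel"
  unfolding gauss_def by simp

lemma space_gauss [simp]: "space (gauss m v) = UNIV"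
  using sets_eq_imp_space_eq[OF sets_gauss] by simp

lemma prob_space_gauss: "prob_space (gauss m v)"
  unfolding gauss_def by (simp add: prob_space_normal_density prob_space_return)

lemma exp_neg_sq_eq_normal_density:
  assumes "a > 0"
  shows "exp (-y\<^sup>2 / a) = sqrt (pi * a) * normal_density 0 (sqrt (a / 2)) y"
  using assms by (simp add: normal_density_def real_sqrt_mult field_simps)

lemma nn_integral_normal_density_mult_exp_neg_sq:
  assumes a: "a > 0" and \<sigma>: "\<sigma> > 0"
  shows "(\<integral>\<^sup>+u. ennreal (normal_density m \<sigma> u * exp (-(u - c)\<^sup>2 / a)) \<partial>lborel)
     = ennreal (1 / sqrt (1 + 2 * \<sigma>\<^sup>2 / a) * exp (-(c - m)\<^sup>2 / (a + 2 * \<sigma>\<^sup>2)))"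
proof -
  define \<tau> where "\<tau> = sqrt (a / 2)"
  have \<tau>: "\<tau> > 0" "\<tau>\<^sup>2 = a / 2" unfolding \<tau>_def using a by simp_all
  define g where "g y = normal_density 0 \<tau> ((c - m) - y) * normal_density 0 \<sigma> y" for y
  have integrand: "normal_density m \<sigma> u * exp (-(u - c)\<^sup>2 / a) = sqrt (pi * a) * g (-m + 1 * u)" for u
  proof -
    have "exp (-(u - c)\<^sup>2 / a) = sqrt (pi * a) * normal_density 0 \<tau> ((c - m) - (u - m))"
      unfolding \<tau>_def using exp_neg_sq_eq_normal_density[OF a] by (simp add: power2_commute)
    then show ?thesis unfolding g_def normal_density_def by (simp add: algebra_simps)
  qed
  have [measurable]: "g \<in> borel_measurable borel" unfolding g_def by measurable
  have "(\<integral>\<^sup>+u. ennreal (normal_density m \<sigma> u * exp (-(u - c)\<^sup>2 / a)) \<partial>lborel)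
      = ennreal (sqrt (pi * a)) * (\<integral>\<^sup>+u. ennreal (g (-m + 1 * u)) \<partial>lborel)"
    unfolding integrand using a
    by (subst nn_integral_cmult[symmetric]) (auto simp: g_def intro!: nn_integral_cong ennreal_mult)
  also have "(\<integral>\<^sup>+u. ennreal (g (-m + 1 * u)) \<partial>lborel) = (\<integral>\<^sup>+y. ennreal (g y) \<partial>lborel)"
    using nn_integral_real_affine[of "\<lambda>y. ennreal (g y)" 1 "-m"] by simp
  also have "\<dots> = normal_density 0 (sqrt (\<tau>\<^sup>2 + \<sigma>\<^sup>2)) (c - m)"
    unfolding g_def using conv_normal_density_zero_mean[OF \<tau>(1) \<sigma>] by metis
  also have "ennreal (sqrt (pi * a)) * ennreal (normal_density 0 (sqrt (\<tau>\<^sup>2 + \<sigma>\<^sup>2)) (c - m))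
      = ennreal (sqrt (pi * a) * normal_density 0 (sqrt (\<tau>\<^sup>2 + \<sigma>\<^sup>2)) (c - m))"
    using a by (intro ennreal_mult[symmetric]) auto
  also have "sqrt (pi * a) * normal_density 0 (sqrt (\<tau>\<^sup>2 + \<sigma>\<^sup>2)) (c - m)
      = 1 / sqrt (1 + 2 * \<sigma>\<^sup>2 / a) * exp (-(c - m)\<^sup>2 / (a + 2 * \<sigma>\<^sup>2))"
  proof -
    have var: "(sqrt (\<tau>\<^sup>2 + \<sigma>\<^sup>2))\<^sup>2 = a / 2 + \<sigma>\<^sup>2" using \<tau>(2) by simp
    have "2 * pi * (a / 2 + \<sigma>\<^sup>2) = pi * a * (1 + 2 * \<sigma>\<^sup>2 / a)" "2 * (a / 2 + \<sigma>\<^sup>2) = a + 2 * \<sigma>\<^sup>2"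
      using a by (simp_all add: field_simps)
    then have "sqrt (pi * a) * normal_density 0 (sqrt (\<tau>\<^sup>2 + \<sigma>\<^sup>2)) (c - m) =
        (sqrt (pi * a) * (1 / sqrt (pi * a * (1 + 2 * \<sigma>\<^sup>2 / a)))) * exp (-(c - m)\<^sup>2 / (a + 2 * \<sigma>\<^sup>2))"
      unfolding normal_density_def var by simp
    also have "sqrt (pi * a) * (1 / sqrt (pi * a * (1 + 2 * \<sigma>\<^sup>2 / a))) = 1 / sqrt (1 + 2 * \<sigma>\<^sup>2 / a)"
      using a by (simp add: real_sqrt_mult)
    finally show ?thesis .
  qed
  finally show ?thesis .
qed

lemma integral_gauss_exp_neg_sq:
  assumes a: "a > 0" and "s2 \<ge> 0"
  shows "(\<integral>u. exp (-(u - c)\<^sup>2 / a) \<partial>gauss m s2)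
     = 1 / sqrt (1 + 2 * s2 / a) * exp (-(c - m)\<^sup>2 / (a + 2 * s2))"
proof (cases "s2 > 0")
  case False
  with \<open>s2 \<ge> 0\<close> show ?thesis unfolding gauss_def by (simp add: integral_return power2_commute)
next
  case True
  define \<sigma> where "\<sigma> = sqrt s2"
  have \<sigma>: "\<sigma> > 0" "s2 = \<sigma>\<^sup>2" unfolding \<sigma>_def using True by simp_all
  have G: "gauss m s2 = density lborel (normal_density m \<sigma>)"
    unfolding gauss_def \<sigma>_def using True by simp
  interpret prob_space "gauss m s2" by (rule prob_space_gauss)
  have "integrable (gauss m s2) (\<lambda>u. exp (-(u - c)\<^sup>2 / a))"
    by (rule integrable_const_bound[where B=1]) (use a in auto)
  then have int: "integrable lborel (\<lambda>u. normal_density m \<sigma> u * exp (-(u - c)\<^sup>2 / a))"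
    unfolding G by (subst (asm) integrable_density) auto
  have "ennreal (\<integral>u. normal_density m \<sigma> u * exp (-(u - c)\<^sup>2 / a) \<partial>lborel)
      = ennreal (1 / sqrt (1 + 2 * \<sigma>\<^sup>2 / a) * exp (-(c - m)\<^sup>2 / (a + 2 * \<sigma>\<^sup>2)))"
    using nn_integral_eq_integral[OF int] nn_integral_normal_density_mult_exp_neg_sq[OF a \<sigma>(1)]
    by simp
  then have "(\<integral>u. normal_density m \<sigma> u * exp (-(u - c)\<^sup>2 / a) \<partial>lborel)
      = 1 / sqrt (1 + 2 * \<sigma>\<^sup>2 / a) * exp (-(c - m)\<^sup>2 / (a + 2 * \<sigma>\<^sup>2))"
    using a by (subst (asm) ennreal_inj) (auto intro!: integral_nonneg_AE add_pos_nonneg)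
  moreover have "(\<integral>u. exp (-(u - c)\<^sup>2 / a) \<partial>gauss m s2)
      = (\<integral>u. normal_density m \<sigma> u * exp (-(u - c)\<^sup>2 / a) \<partial>lborel)"
    unfolding G by (subst integral_density) auto
  ultimately show ?thesis using \<sigma>(2) by simp
qed

section \<open>Gaussian mixtures\<close>

lemma gauss_eq_distr_std:
  "gauss \<mu> v = distr (gauss 0 1) borel (\<lambda>z. \<mu> + sqrt (max v 0) * z)"
proof -
  interpret prob_space "gauss 0 1" by (rule prob_space_gauss)
  show ?thesis
  proof (cases "v > 0")
    case False
    then show ?thesis unfolding gauss_def[of \<mu>] by simp
  next
    case True
    define \<sigma> where "\<sigma> = sqrt v"
    have \<sigma>: "\<sigma> > 0" unfolding \<sigma>_def using True by simp
    have "distributed (gauss 0 1) lborel (\<lambda>x. x) (normal_density 0 1)"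
      unfolding distributed_def gauss_def by (simp add: distr_id2)
    from normal_density_affine[OF this _ \<sigma>[THEN less_imp_neq, symmetric], of \<mu>] \<sigma>
    have "distr (gauss 0 1) lborel (\<lambda>x. \<mu> + \<sigma> * x) = density lborel (normal_density \<mu> \<sigma>)"
      unfolding distributed_def by simp
    moreover have "distr (gauss 0 1) borel (\<lambda>x. \<mu> + \<sigma> * x) = distr (gauss 0 1) lborel (\<lambda>x. \<mu> + \<sigma> * x)"
      by (rule measure_eqI) (simp_all add: emeasure_distr)
    ultimately show ?thesis using True unfolding gauss_def \<sigma>_def by simp
  qed
qed

lemma std_gauss_affine_moments:
  shows "integrable (gauss 0 1) (\<lambda>z. a + b * z)" "integrable (gauss 0 1) (\<lambda>z. (a + b * z)\<^sup>2)"
    "(\<integral>z. a + b * z \<partial>gauss 0 1) = a" "(\<integral>z. (a + b * z)\<^sup>2 \<partial>gauss 0 1) = a\<^sup>2 + b\<^sup>2"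
proof -
  interpret prob_space "gauss 0 1" by (rule prob_space_gauss)
  have std: "gauss 0 1 = density lborel std_normal_density" unfolding gauss_def by simp
  have moments: "integrable (gauss 0 1) (\<lambda>z. z)" "integrable (gauss 0 1) (\<lambda>z. z\<^sup>2)"
    "(\<integral>z. z \<partial>gauss 0 1) = 0" "(\<integral>z. z\<^sup>2 \<partial>gauss 0 1) = 1"
    using integrable_std_normal_moment[of 1] integrable_std_normal_moment[of 2]
      integral_std_normal_moment_odd[of 0] integral_std_normal_moment_even[of 1]
    unfolding std by (simp_all add: integrable_density integral_density)
  have sq: "(a + b * z)\<^sup>2 = a\<^sup>2 + (2 * a * b) * z + b\<^sup>2 * z\<^sup>2" for z
    by (simp add: power2_eq_square algebra_simps)
  show "integrable (gauss 0 1) (\<lambda>z. a + b * z)" "integrable (gauss 0 1) (\<lambda>z. (a + b * z)\<^sup>2)"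
    "(\<integral>z. a + b * z \<partial>gauss 0 1) = a" "(\<integral>z. (a + b * z)\<^sup>2 \<partial>gauss 0 1) = a\<^sup>2 + b\<^sup>2"
    unfolding sq using moments prob_space by simp_all
qed

lemma bind_distr_eq_distr_pair:
  assumes P: "prob_space P" and Q: "prob_space Q"
    and h[measurable]: "case_prod h \<in> measurable (P \<Otimes>\<^sub>M Q) M"
  shows "P \<bind> (\<lambda>u. distr Q M (h u)) = distr (P \<Otimes>\<^sub>M Q) M (case_prod h)"
proof -
  interpret P: prob_space P by (rule P)
  interpret Q: prob_space Q by (rule Q)
  have K: "(\<lambda>u. distr Q M (h u)) \<in> measurable P (subprob_algebra M)"
    by (rule measurable_distr2[OF h]) (simp add: Q.M_in_subprob)
  show ?thesis
  proof (rule measure_eqI)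
    show "sets (P \<bind> (\<lambda>u. distr Q M (h u))) = sets (distr (P \<Otimes>\<^sub>M Q) M (case_prod h))"
      using sets_bind[OF sets_kernel[OF K] P.not_empty] by simp
  next
    fix A assume "A \<in> sets (P \<bind> (\<lambda>u. distr Q M (h u)))"
    then have A[measurable]: "A \<in> sets M"
      using sets_bind[OF sets_kernel[OF K] P.not_empty] by simp
    have "emeasure (P \<bind> (\<lambda>u. distr Q M (h u))) A = (\<integral>\<^sup>+u. emeasure (distr Q M (h u)) A \<partial>P)"
      by (rule emeasure_bind[OF P.not_empty K A])
    also have "\<dots> = (\<integral>\<^sup>+u. emeasure Q (Pair u -` (case_prod h -` A \<inter> space (P \<Otimes>\<^sub>M Q))) \<partial>P)"
    proof (rule nn_integral_cong)
      fix u assume u: "u \<in> space P"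
      have "Pair u -` (case_prod h -` A \<inter> space (P \<Otimes>\<^sub>M Q)) = h u -` A \<inter> space Q"
        using u by (auto simp: space_pair_measure)
      then show "emeasure (distr Q M (h u)) A = emeasure Q (Pair u -` (case_prod h -` A \<inter> space (P \<Otimes>\<^sub>M Q)))"
        using measurable_compose_Pair1[OF u h] by (simp add: emeasure_distr)
    qed
    also have "\<dots> = emeasure (P \<Otimes>\<^sub>M Q) (case_prod h -` A \<inter> space (P \<Otimes>\<^sub>M Q))"
      by (rule Q.emeasure_pair_measure_alt[symmetric]) measurable
    also have "\<dots> = emeasure (distr (P \<Otimes>\<^sub>M Q) M (case_prod h)) A"
      by (simp add: emeasure_distr)
    finally show "emeasure (P \<bind> (\<lambda>u. distr Q M (h u))) A = emeasure (distr (P \<Otimes>\<^sub>M Q) M (case_prod h)) A" .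
  qed
qed

text \<open>Realise the mixture as the law of \<open>mu u + sqrt (sg u) * z\<close> with \<open>z\<close> standard normal
  and independent of \<open>u\<close>, and integrate out \<open>z\<close> first (Fubini).\<close>
lemma gauss_mixture_moments:
  fixes mu sg :: "'a \<Rightarrow> real"
  assumes P: "prob_space P"
    and [measurable]: "mu \<in> borel_measurable P" "sg \<in> borel_measurable P"
    and sg_nonneg: "\<And>u. 0 \<le> sg u"
    and int_P: "integrable P (\<lambda>u. (mu u)\<^sup>2 + sg u)"
  defines "N \<equiv> P \<bind> (\<lambda>u. gauss (mu u) (sg u))"
  shows "prob_space N" "integrable N (\<lambda>z. z)" "integrable N (\<lambda>z. z\<^sup>2)"
    "(\<integral>z. z \<partial>N) = (\<integral>u. mu u \<partial>P)" "(\<integral>z. z\<^sup>2 \<partial>N) = (\<integral>u. (mu u)\<^sup>2 + sg u \<partial>P)"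
proof -
  interpret P: prob_space P by (rule P)
  interpret Z: prob_space "gauss 0 1" by (rule prob_space_gauss)
  interpret PZ: pair_prob_space P "gauss 0 1" ..
  define sd where "sd u = sqrt (max (sg u) 0)" for u
  have [measurable]: "sd \<in> borel_measurable P" unfolding sd_def by measurable
  have sd_sq: "(sd u)\<^sup>2 = sg u" for u unfolding sd_def using sg_nonneg[of u] by simp
  define H where "H = (\<lambda>(u, z). mu u + sd u * z)"
  have [measurable]: "H \<in> borel_measurable (P \<Otimes>\<^sub>M gauss 0 1)" unfolding H_def by measurable
  have N_eq: "N = distr (P \<Otimes>\<^sub>M gauss 0 1) borel H"
    unfolding N_def H_def sd_def gauss_eq_distr_std[of "mu _"]
    by (rule bind_distr_eq_distr_pair[OF P prob_space_gauss]) measurable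
  have int_sq: "integrable (P \<Otimes>\<^sub>M gauss 0 1) (\<lambda>x. (H x)\<^sup>2)"
  proof (rule PZ.Fubini_integrable)
    show "integrable P (\<lambda>u. \<integral>z. norm ((H (u, z))\<^sup>2) \<partial>gauss 0 1)"
      using int_P by (simp add: H_def std_gauss_affine_moments sd_sq)
    show "AE u in P. integrable (gauss 0 1) (\<lambda>z. (H (u, z))\<^sup>2)"
      by (simp add: H_def std_gauss_affine_moments)
  qed measurable
  have int: "integrable (P \<Otimes>\<^sub>M gauss 0 1) H"
    by (rule PZ.square_integrable_imp_integrable) (measurable, fact int_sq)
  show "prob_space N"
    unfolding N_eq by (rule prob_space.prob_space_distr[OF PZ.prob_space_axioms]) simp
  show "integrable N (\<lambda>z. z)" "integrable N (\<lambda>z. z\<^sup>2)"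
    unfolding N_eq using int int_sq by (simp_all add: integrable_distr_eq)
  have "(\<integral>z. z \<partial>N) = (\<integral>u. (\<integral>z. H (u, z) \<partial>gauss 0 1) \<partial>P)"
    unfolding N_eq by (simp add: integral_distr PZ.integral_fst'[OF int])
  then show "(\<integral>z. z \<partial>N) = (\<integral>u. mu u \<partial>P)"
    by (simp add: H_def std_gauss_affine_moments)
  have "(\<integral>z. z\<^sup>2 \<partial>N) = (\<integral>u. (\<integral>z. (H (u, z))\<^sup>2 \<partial>gauss 0 1) \<partial>P)"
    unfolding N_eq by (simp add: integral_distr PZ.integral_fst'[OF int_sq])
  then show "(\<integral>z. z\<^sup>2 \<partial>N) = (\<integral>u. (mu u)\<^sup>2 + sg u \<partial>P)"
    by (simp add: H_def std_gauss_affine_moments sd_sq)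
qed

section \<open>The kernel predictor under a Gaussian input\<close>

lemma kvecL_nth:
  "kvecL theta thy X w x u $ i = exp (-(u - w$i)\<^sup>2 / thy) * sqexp theta x (X i)"
  unfolding kvecL_def Kl_def by simp

lemma sqexp_nonneg: "0 \<le> sqexp theta x x'"
  unfolding sqexp_def by (simp add: prod_nonneg)

lemma sqexp_le_one: "(\<And>j. theta$j \<ge> 0) \<Longrightarrow> sqexp theta x x' \<le> 1"
  unfolding sqexp_def by (rule prod_le_1) (auto simp: divide_nonneg_nonneg)

lemma sqexp_mult:
  "sqexp theta x x' * sqexp theta x x''
     = (\<Prod>j\<in>UNIV. exp (-((x$j - x'$j)\<^sup>2 + (x$j - x''$j)\<^sup>2) / theta$j))"
  unfolding sqexp_def
  by (simp add: prod.distrib[symmetric] exp_add[symmetric] add_divide_distrib diff_divide_distrib)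

lemma kvecL_nth_bounds:
  assumes "\<And>j. theta$j \<ge> 0" and "thy \<ge> 0"
  shows "0 \<le> kvecL theta thy X w x u $ i" "kvecL theta thy X w x u $ i \<le> 1"
  using assms sqexp_nonneg[of theta x "X i"] sqexp_le_one[of theta x "X i"]
  by (auto simp: kvecL_nth divide_nonneg_nonneg intro: mult_le_one)

lemma measurable_kvecL_nth [measurable]:
  "(\<lambda>u. kvecL theta thy X w x u $ i) \<in> borel_measurable borel"
  unfolding kvecL_nth by measurable

lemma measurable_muL [measurable]: "muL theta thy X w y alpha x \<in> borel_measurable borel"
  unfolding muL_def by measurable

lemma measurable_sig2L [measurable]: "sig2L theta thy X w tau2 x \<in> borel_measurable borel"
  unfolding sig2L_def matrix_vector_mult_def vec_lambda_beta by measurable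

lemma integrable_gauss_kvecL:
  assumes "\<And>j. theta$j \<ge> 0" and "thy \<ge> 0"
  shows "integrable (gauss m s2) (\<lambda>u. kvecL theta thy X w x u $ i)"
    and "integrable (gauss m s2) (\<lambda>u. kvecL theta thy X w x u $ i * kvecL theta thy X w x u $ k)"
proof -
  interpret prob_space "gauss m s2" by (rule prob_space_gauss)
  note bounds = kvecL_nth_bounds[OF assms]
  show "integrable (gauss m s2) (\<lambda>u. kvecL theta thy X w x u $ i)"
    by (rule integrable_const_bound[where B=1]) (auto intro!: AE_I2 simp: bounds abs_of_nonneg)
  show "integrable (gauss m s2) (\<lambda>u. kvecL theta thy X w x u $ i * kvecL theta thy X w x u $ k)"
    by (rule integrable_const_bound[where B=1]) (auto intro!: AE_I2 mult_le_one simp: bounds abs_mult)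
qed

lemma exp_neg_sq_mult_exp_neg_sq:
  fixes t u a b :: real
  assumes "t > 0"
  shows "exp (-(u - a)\<^sup>2 / t) * exp (-(u - b)\<^sup>2 / t)
     = exp (-(a - b)\<^sup>2 / (2 * t)) * exp (-(u - (a + b) / 2)\<^sup>2 / (t / 2))"
proof -
  have "-(u - a)\<^sup>2 / t + -(u - b)\<^sup>2 / t = -(a - b)\<^sup>2 / (2 * t) + -(u - (a + b) / 2)\<^sup>2 / (t / 2)"
    using assms by (simp add: field_simps power2_eq_square)
  then show ?thesis by (simp add: exp_add[symmetric])
qed

lemma integral_gauss_kvecL:
  assumes "thy > 0" and "s2 \<ge> 0"
  shows "(\<integral>u. kvecL theta thy X w x u $ i \<partial>gauss m s2)
     = sqexp theta x (X i) * (1 / sqrt (1 + 2 * s2 / thy)) * exp (-(w$i - m)\<^sup>2 / (thy + 2 * s2))"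
  using integral_gauss_exp_neg_sq[OF assms, where c="w$i" and m=m] by (simp add: kvecL_nth mult_ac)

lemma integral_gauss_kvecL_mult:
  assumes "thy > 0" and "s2 \<ge> 0"
  shows "(\<integral>u. kvecL theta thy X w x u $ i * kvecL theta thy X w x u $ k \<partial>gauss m s2)
     = (1 / sqrt (1 + 4 * s2 / thy)) *
         exp (- ((w$i + w$k) / 2 - m)\<^sup>2 / (thy / 2 + 2 * s2) - (w$i - w$k)\<^sup>2 / (2 * thy))
       * (sqexp theta x (X i) * sqexp theta x (X k))"
proof -
  define c where "c = exp (-(w$i - w$k)\<^sup>2 / (2 * thy)) * (sqexp theta x (X i) * sqexp theta x (X k))"
  have "kvecL theta thy X w x u $ i * kvecL theta thy X w x u $ k
      = c * exp (-(u - (w$i + w$k) / 2)\<^sup>2 / (thy / 2))" for u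
    using exp_neg_sq_mult_exp_neg_sq[OF \<open>thy > 0\<close>, of u "w$i" "w$k"]
    unfolding c_def by (simp add: kvecL_nth algebra_simps)
  then have "(\<integral>u. kvecL theta thy X w x u $ i * kvecL theta thy X w x u $ k \<partial>gauss m s2)
      = c * (1 / sqrt (1 + 2 * s2 / (thy / 2)) * exp (-((w$i + w$k) / 2 - m)\<^sup>2 / (thy / 2 + 2 * s2)))"
    using assms integral_gauss_exp_neg_sq[of "thy / 2" s2, where c="(w$i + w$k) / 2" and m=m] by simp
  moreover have "2 * s2 / (thy / 2) = 4 * s2 / thy" by simp
  ultimately show ?thesis
    unfolding c_def by (simp add: exp_diff exp_minus field_simps)
qed

lemma mean_sq_plus_var_kernel_predictor:
  fixes k r :: "real^'n::finite" and A :: "real^'n^'n"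
  shows "(a + (\<Sum>i\<in>UNIV. k$i * r$i))\<^sup>2 + t * (1 - (\<Sum>i\<in>UNIV. k$i * (A *v k)$i))
     = a\<^sup>2 + 2 * a * (\<Sum>i\<in>UNIV. k$i * r$i)
       + (\<Sum>i\<in>UNIV. \<Sum>j\<in>UNIV. (r$i * r$j - t * A$i$j) * (k$i * k$j)) + t"
proof -
  have "(\<Sum>i\<in>UNIV. \<Sum>j\<in>UNIV. (r$i * r$j - t * A$i$j) * (k$i * k$j))
      = (\<Sum>i\<in>UNIV. k$i * r$i)\<^sup>2 - t * (\<Sum>i\<in>UNIV. k$i * (A *v k)$i)"
    by (simp add: power2_eq_square sum_product matrix_vector_mult_def sum_distrib_left
        sum_subtractf algebra_simps)
  then show ?thesis by (simp add: power2_sum algebra_simps)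
qed

lemma integral_kernel_predictor:
  fixes k :: "'a \<Rightarrow> real^'n::finite" and r :: "real^'n" and A :: "real^'n^'n"
  assumes P: "prob_space P"
    and int_k: "\<And>i. integrable P (\<lambda>u. k u $ i)"
    and int_kk: "\<And>i j. integrable P (\<lambda>u. k u $ i * k u $ j)"
    and mu_def: "mu = (\<lambda>u. a + (\<Sum>i\<in>UNIV. k u $ i * r$i))"
    and sg_def: "sg = (\<lambda>u. t * (1 - (\<Sum>i\<in>UNIV. k u $ i * (A *v k u) $ i)))"
  shows "integrable P (\<lambda>u. (mu u)\<^sup>2 + sg u)"
    and "(\<integral>u. mu u \<partial>P) = a + (\<Sum>i\<in>UNIV. (\<integral>u. k u $ i \<partial>P) * r$i)"
    and "(\<integral>u. (mu u)\<^sup>2 + sg u \<partial>P) = a\<^sup>2 + 2 * a * (\<Sum>i\<in>UNIV. (\<integral>u. k u $ i \<partial>P) * r$i)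
          + (\<Sum>i\<in>UNIV. \<Sum>j\<in>UNIV. (r$i * r$j - t * A$i$j) * (\<integral>u. k u $ i * k u $ j \<partial>P)) + t"
proof -
  interpret prob_space P by (rule P)
  have second: "(mu u)\<^sup>2 + sg u = a\<^sup>2 + 2 * a * (\<Sum>i\<in>UNIV. k u $ i * r$i)
       + (\<Sum>i\<in>UNIV. \<Sum>j\<in>UNIV. (r$i * r$j - t * A$i$j) * (k u $ i * k u $ j)) + t" for u
    unfolding mu_def sg_def by (rule mean_sq_plus_var_kernel_predictor)
  show "integrable P (\<lambda>u. (mu u)\<^sup>2 + sg u)"
    unfolding second using int_k int_kk by simp
  show "(\<integral>u. mu u \<partial>P) = a + (\<Sum>i\<in>UNIV. (\<integral>u. k u $ i \<partial>P) * r$i)"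
    unfolding mu_def using int_k prob_space by simp
  show "(\<integral>u. (mu u)\<^sup>2 + sg u \<partial>P) = a\<^sup>2 + 2 * a * (\<Sum>i\<in>UNIV. (\<integral>u. k u $ i \<partial>P) * r$i)
          + (\<Sum>i\<in>UNIV. \<Sum>j\<in>UNIV. (r$i * r$j - t * A$i$j) * (\<integral>u. k u $ i * k u $ j \<partial>P)) + t"
    unfolding second using int_k int_kk prob_space by simp
qed

theorem proposition3p1:
  fixes alpha tau2 thy m s2 :: real
    and theta x :: "real^'d"
    and X :: "'n::finite \<Rightarrow> real^('d::finite)"
    and w y :: "real^'n"
  assumes tau2_pos: "tau2 > 0"
    and theta_pos: "\<forall>j. theta$j > 0"
    and thy_pos: "thy > 0"
    and K_inv: "invertible (gramL theta thy X w)"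
    and s2_nonneg: "s2 \<ge> 0"
  defines "N \<equiv> gauss m s2 \<bind>
                 (\<lambda>u. gauss (muL theta thy X w y alpha x u) (sig2L theta thy X w tau2 x u))"
    and "r \<equiv> rvecL theta thy X w y alpha"
    and "Kinv \<equiv> matrix_inv (gramL theta thy X w)"
  defines "mustar \<equiv> alpha + (\<Sum>i\<in>UNIV. r$i * (\<Prod>j\<in>UNIV. exp (- (x$j - X i $ j)\<^sup>2 / theta$j))
                       * (1 / sqrt (1 + 2 * s2 / thy)) * exp (- (w$i - m)\<^sup>2 / (thy + 2 * s2)))"
    and "zeta \<equiv> (\<lambda>i k. (1 / sqrt (1 + 4 * s2 / thy)) *
                   exp (- ((w$i + w$k) / 2 - m)\<^sup>2 / (thy / 2 + 2 * s2) - (w$i - w$k)\<^sup>2 / (2 * thy)))"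
  shows "integrable N (\<lambda>z. z) \<and> integrable N (\<lambda>z. z\<^sup>2)
         \<and> (\<integral>z. z \<partial>N) = mustar
         \<and> (\<integral>z. (z - (\<integral>z'. z' \<partial>N))\<^sup>2 \<partial>N) =
             tau2 - (mustar - alpha)\<^sup>2
             + (\<Sum>i\<in>UNIV. \<Sum>k\<in>UNIV. zeta i k * (r$i * r$k - tau2 * Kinv$i$k)
                 * (\<Prod>j\<in>UNIV. exp (- ((x$j - X i $ j)\<^sup>2 + (x$j - X k $ j)\<^sup>2) / theta$j)))"
proof -
  let ?k = "kvecL theta thy X w x"
  have mu_eq: "muL theta thy X w y alpha x = (\<lambda>u. alpha + (\<Sum>i\<in>UNIV. ?k u $ i * r$i))"
    unfolding muL_def r_def ..
  have sg_eq: "sig2L theta thy X w tau2 x = (\<lambda>u. tau2 * (1 - (\<Sum>i\<in>UNIV. ?k u $ i * (Kinv *v ?k u) $ i)))"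
    unfolding sig2L_def Kinv_def ..
  have theta_nonneg: "theta$j \<ge> 0" for j
    using theta_pos by (simp add: less_imp_le)
  note predictor = integral_kernel_predictor[OF prob_space_gauss
      integrable_gauss_kvecL[OF theta_nonneg less_imp_le[OF thy_pos]] mu_eq sg_eq]
  have sg_nonneg: "0 \<le> sig2L theta thy X w tau2 x u" for u
    using tau2_pos theta_pos thy_pos K_inv by (intro sig2L_nonneg) simp_all
  have measurable: "muL theta thy X w y alpha x \<in> borel_measurable (gauss m s2)"
    "sig2L theta thy X w tau2 x \<in> borel_measurable (gauss m s2)"
    by (simp_all add: measurable_cong_sets[OF sets_gauss refl])
  note mixture = gauss_mixture_moments[OF prob_space_gauss measurable sg_nonneg
      predictor(1), folded N_def]
  have mean: "(\<integral>u. muL theta thy X w y alpha x u \<partial>gauss m s2) = mustar"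
    unfolding predictor(2) integral_gauss_kvecL[OF thy_pos s2_nonneg] mustar_def sqexp_def
    by (simp add: mult_ac)
  have second_moment: "(\<integral>u. (muL theta thy X w y alpha x u)\<^sup>2 + sig2L theta thy X w tau2 x u \<partial>gauss m s2)
      = alpha\<^sup>2 + 2 * alpha * (mustar - alpha) + tau2
        + (\<Sum>i\<in>UNIV. \<Sum>k\<in>UNIV. zeta i k * (r$i * r$k - tau2 * Kinv$i$k)
            * (\<Prod>j\<in>UNIV. exp (- ((x$j - X i $ j)\<^sup>2 + (x$j - X k $ j)\<^sup>2) / theta$j)))"
    using mean unfolding predictor(2,3) integral_gauss_kvecL_mult[OF thy_pos s2_nonneg] sqexp_mult zeta_def
    by (simp add: mult_ac)
  have "(\<integral>z. (z - (\<integral>z'. z' \<partial>N))\<^sup>2 \<partial>N) = (\<integral>z. z\<^sup>2 \<partial>N) - (\<integral>z. z \<partial>N)\<^sup>2"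
    using prob_space.variance_eq[OF mixture(1,2,3)] .
  then show ?thesis
    using mixture(2-5) mean second_moment by (simp add: power2_eq_square algebra_simps)
qed

end
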